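(* Let $S$ be a pogroup. In the full subcategory of $\mathbf{Pos}\text{-}S$ consisting of $S$-posets with trivial action, the pair $(Emb, Top)$ is a weak factorization system; in particular every $S$-poset map $f:X\to B$ between $S$-posets with trivial action factors as $f=g\circ m$ with $m:X\to Y$ an order-embedding, $g:Y\to B$ a topological monotone map, and $Y$ an $S$-poset with trivial action.
   Context: A pogroup is a group with a compatible partial order. $\mathbf{Pos}\text{-}S$: right $S$-posets and action-preserving monotone maps; trivial action means $as=a$ for all $a,s$. $Emb$ is the class of order-embeddings ($f(a)\le f(a')\iff a\le a'$); $Top$ is the class of monotone maps that are topological functors (posets as categories; a functor $G$ is topological if every $G$-structured source has a unique $G$-initial lift). A weak factorization system is a pair $(\mathcal L,\mathcal R)$ of morphism classes such that every morphism factors as an $\mathcal L$-morphism followed by an $\mathcal R$-morphism, $\mathcal R=\mathcal L^{\Box}$ and $\mathcal L={}^{\Box}\mathcal R$, where $\mathcal H^{\Box}$ and ${}^{\Box}\mathcal H$ denote the morphisms having the right, respectively left, lifting property (existence of diagonal fillers in commutative squares) against all members of $\mathcal H$. *)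

theory Defs
  imports "HOL-Algebra.Group"
begin

definition is_poset :: "'a set \<Rightarrow> ('a \<Rightarrow> 'a \<Rightarrow> bool) \<Rightarrow> bool" where
  "is_poset X r \<longleftrightarrow>
     (\<forall>x\<in>X. r x x) \<and>
     (\<forall>x\<in>X. \<forall>y\<in>X. r x y \<and> r y x \<longrightarrow> x = y) \<and>
     (\<forall>x\<in>X. \<forall>y\<in>X. \<forall>z\<in>X. r x y \<and> r y z \<longrightarrow> r x z)"

definition pogroup :: "'s monoid \<Rightarrow> ('s \<Rightarrow> 's \<Rightarrow> bool) \<Rightarrow> bool" where
  "pogroup G leS \<longleftrightarrow> group G \<and> is_poset (carrier G) leS \<and>
     (\<forall>a\<in>carrier G. \<forall>b\<in>carrier G. \<forall>c\<in>carrier G. leS a b \<longrightarrow>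
        leS (a \<otimes>\<^bsub>G\<^esub> c) (b \<otimes>\<^bsub>G\<^esub> c) \<and> leS (c \<otimes>\<^bsub>G\<^esub> a) (c \<otimes>\<^bsub>G\<^esub> b))"

record ('a, 's) spos =
  pcar :: "'a set"
  pleq :: "'a \<Rightarrow> 'a \<Rightarrow> bool"
  pact :: "'a \<Rightarrow> 's \<Rightarrow> 'a"

definition S_poset :: "'s monoid \<Rightarrow> ('s \<Rightarrow> 's \<Rightarrow> bool) \<Rightarrow> ('a, 's) spos \<Rightarrow> bool" where
  "S_poset G leS X \<longleftrightarrow> is_poset (pcar X) (pleq X) \<and>
     (\<forall>x\<in>pcar X. \<forall>s\<in>carrier G. pact X x s \<in> pcar X) \<and>
     (\<forall>x\<in>pcar X. pact X x \<one>\<^bsub>G\<^esub> = x) \<and>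
     (\<forall>x\<in>pcar X. \<forall>s\<in>carrier G. \<forall>t\<in>carrier G.
        pact X (pact X x s) t = pact X x (s \<otimes>\<^bsub>G\<^esub> t)) \<and>
     (\<forall>x\<in>pcar X. \<forall>y\<in>pcar X. \<forall>s\<in>carrier G.
        pleq X x y \<longrightarrow> pleq X (pact X x s) (pact X y s)) \<and>
     (\<forall>x\<in>pcar X. \<forall>s\<in>carrier G. \<forall>t\<in>carrier G.
        leS s t \<longrightarrow> pleq X (pact X x s) (pact X x t))"

definition triv_S_poset :: "'s monoid \<Rightarrow> ('s \<Rightarrow> 's \<Rightarrow> bool) \<Rightarrow> ('a, 's) spos \<Rightarrow> bool" where
  "triv_S_poset G leS X \<longleftrightarrow> S_poset G leS X \<and>
     (\<forall>x\<in>pcar X. \<forall>s\<in>carrier G. pact X x s = x)"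

definition S_map :: "'s monoid \<Rightarrow> ('a, 's) spos \<Rightarrow> ('b, 's) spos \<Rightarrow> ('a \<Rightarrow> 'b) \<Rightarrow> bool" where
  "S_map G X Y f \<longleftrightarrow>
     (\<forall>x\<in>pcar X. f x \<in> pcar Y) \<and>
     (\<forall>x\<in>pcar X. \<forall>x'\<in>pcar X. pleq X x x' \<longrightarrow> pleq Y (f x) (f x')) \<and>
     (\<forall>x\<in>pcar X. \<forall>s\<in>carrier G. f (pact X x s) = pact Y (f x) s)"

definition Emb :: "'s monoid \<Rightarrow> ('a, 's) spos \<Rightarrow> ('b, 's) spos \<Rightarrow> ('a \<Rightarrow> 'b) \<Rightarrow> bool" where
  "Emb G X Y f \<longleftrightarrow> S_map G X Y f \<and>
     (\<forall>x\<in>pcar X. \<forall>x'\<in>pcar X. pleq Y (f x) (f x') \<longleftrightarrow> pleq X x x')"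

text \<open>Class Top: monotone maps that are topological functors (posets as thin categories).
  A G-structured source is an object b of Y together with a family of objects a of X
  with morphisms b -> G a, i.e. b <= G a; it is given here by the set A of the targets.\<close>

definition Top :: "'s monoid \<Rightarrow> ('a, 's) spos \<Rightarrow> ('b, 's) spos \<Rightarrow> ('a \<Rightarrow> 'b) \<Rightarrow> bool" where
  "Top G X Y g \<longleftrightarrow> S_map G X Y g \<and>
     (\<forall>b\<in>pcar Y. \<forall>A. A \<subseteq> pcar X \<longrightarrow> (\<forall>a\<in>A. pleq Y b (g a)) \<longrightarrow>
        (\<exists>!x. x \<in> pcar X \<and> g x = b \<and> (\<forall>a\<in>A. pleq X x a) \<and>
              (\<forall>z\<in>pcar X. pleq Y (g z) b \<and> (\<forall>a\<in>A. pleq X z a) \<longrightarrow> pleq X z x)))"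

definition has_lift :: "'s monoid \<Rightarrow> ('a, 's) spos \<Rightarrow> ('b, 's) spos \<Rightarrow> ('a \<Rightarrow> 'b)
    \<Rightarrow> ('c, 's) spos \<Rightarrow> ('d, 's) spos \<Rightarrow> ('c \<Rightarrow> 'd) \<Rightarrow> bool" where
  "has_lift G A B l C D r \<longleftrightarrow>
     (\<forall>u v. S_map G A C u \<longrightarrow> S_map G B D v \<longrightarrow> (\<forall>a\<in>pcar A. r (u a) = v (l a)) \<longrightarrow>
        (\<exists>d. S_map G B C d \<and> (\<forall>a\<in>pcar A. d (l a) = u a) \<and> (\<forall>b\<in>pcar B. r (d b) = v b)))"

end

theory Submission
  imports Defs
begin

(* The four conjuncts
   of the theorem are then proved separately.
   (1) Factorization: f : X -> B factors through the poset of pairs (b, S), S a subset of X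
       mapped below b, via the order-embedding x |-> (f x, down-set of x) followed by the
       first projection, which is topological.
   (2) Embeddings lift against topological maps: the diagonal sends b to the initial lift of
       the source (v b, u[{a. b <= l a}]).
   (3) A map lifting against all embeddings P -> Q into a one-point extension is topological:
       adjoining a point between the candidates for an initial lift of (b, A) and A itself,
       the filler sends the new point to the initial lift.
   (4) A map lifting against the topological collapse Pow(A) -> 1 is an embedding: fill in
       the down-set map of A. *)

lemma is_poset_refl: "is_poset X r \<Longrightarrow> x \<in> X \<Longrightarrow> r x x"
  unfolding is_poset_def by blast

lemma is_poset_antisym: "is_poset X r \<Longrightarrow> x \<in> X \<Longrightarrow> y \<in> X \<Longrightarrow> r x y \<Longrightarrow> r y x \<Longrightarrow> x = y"
  unfolding is_poset_def by blast

lemma is_poset_trans: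
  "is_poset X r \<Longrightarrow> x \<in> X \<Longrightarrow> y \<in> X \<Longrightarrow> z \<in> X \<Longrightarrow> r x y \<Longrightarrow> r y z \<Longrightarrow> r x z"
  unfolding is_poset_def by blast

lemma is_posetI:
  assumes "\<And>x. x \<in> X \<Longrightarrow> r x x"
    and "\<And>x y. x \<in> X \<Longrightarrow> y \<in> X \<Longrightarrow> r x y \<Longrightarrow> r y x \<Longrightarrow> x = y"
    and "\<And>x y z. x \<in> X \<Longrightarrow> y \<in> X \<Longrightarrow> z \<in> X \<Longrightarrow> r x y \<Longrightarrow> r y z \<Longrightarrow> r x z"
  shows "is_poset X r"
  unfolding is_poset_def using assms by blast

lemma is_poset_subset: "is_poset X r \<Longrightarrow> Y \<subseteq> X \<Longrightarrow> is_poset Y r"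
  unfolding is_poset_def by blast

definition trivial_spos :: "'a set \<Rightarrow> ('a \<Rightarrow> 'a \<Rightarrow> bool) \<Rightarrow> ('a, 's) spos" where
  "trivial_spos X r = \<lparr>pcar = X, pleq = r, pact = (\<lambda>x s. x)\<rparr>"

lemma trivial_spos_simps [simp]:
  "pcar (trivial_spos X r) = X" "pleq (trivial_spos X r) = r"
  by (simp_all add: trivial_spos_def)

lemma triv_S_poset_trivial_spos: "is_poset X r \<Longrightarrow> triv_S_poset G leS (trivial_spos X r)"
  unfolding triv_S_poset_def S_poset_def trivial_spos_def by (simp add: is_poset_refl)

lemma triv_S_poset_is_poset: "triv_S_poset G leS X \<Longrightarrow> is_poset (pcar X) (pleq X)"
  by (simp add: triv_S_poset_def S_poset_def)

lemma S_map_trivial_iff: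
  assumes "triv_S_poset G leS X" and "triv_S_poset G leS Y"
  shows "S_map G X Y f \<longleftrightarrow> (\<forall>x\<in>pcar X. f x \<in> pcar Y) \<and>
    (\<forall>x\<in>pcar X. \<forall>x'\<in>pcar X. pleq X x x' \<longrightarrow> pleq Y (f x) (f x'))"
  using assms by (auto simp: triv_S_poset_def S_map_def)

definition down_set :: "('a, 's) spos \<Rightarrow> 'a \<Rightarrow> 'a set" where
  "down_set X x = {y \<in> pcar X. pleq X y x}"

lemma down_set_subset_iff:
  assumes "is_poset (pcar X) (pleq X)" "x \<in> pcar X" "x' \<in> pcar X"
  shows "down_set X x \<subseteq> down_set X x' \<longleftrightarrow> pleq X x x'"
  using assms is_poset_refl[OF assms(1,2)] is_poset_trans[OF assms(1) _ assms(2,3)]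
  unfolding down_set_def by blast

section \<open>Initial lifts\<close>

definition initial_lift ::
    "('c, 's) spos \<Rightarrow> ('d, 's) spos \<Rightarrow> ('c \<Rightarrow> 'd) \<Rightarrow> 'd \<Rightarrow> 'c set \<Rightarrow> 'c \<Rightarrow> bool" where
  "initial_lift C D r b A x \<longleftrightarrow> x \<in> pcar C \<and> r x = b \<and> (\<forall>a\<in>A. pleq C x a) \<and>
     (\<forall>z\<in>pcar C. pleq D (r z) b \<and> (\<forall>a\<in>A. pleq C z a) \<longrightarrow> pleq C z x)"

lemma initial_lift_mono:
  assumes "initial_lift C D r b A x" "initial_lift C D r b' A' x'"
    and "pleq D b b'" "A' \<subseteq> A"
  shows "pleq C x x'"
  using assms unfolding initial_lift_def by blast

lemma initial_lift_unique:
  assumes "is_poset (pcar C) (pleq C)" "is_poset (pcar D) (pleq D)" "b \<in> pcar D"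
    and x: "initial_lift C D r b A x" and x': "initial_lift C D r b A x'"
  shows "x = x'"
proof -
  have "pleq D b b" using assms(2,3) by (rule is_poset_refl)
  then have "pleq C x x'" "pleq C x' x"
    using initial_lift_mono[OF x x'] initial_lift_mono[OF x' x] by simp_all
  moreover have "x \<in> pcar C" "x' \<in> pcar C" using x x' unfolding initial_lift_def by simp_all
  ultimately show ?thesis using assms(1) is_poset_antisym by metis
qed

lemma Top_iff_initial_lifts:
  assumes C: "triv_S_poset G leS C" and D: "triv_S_poset G leS D"
  shows "Top G C D r \<longleftrightarrow> S_map G C D r \<and>
    (\<forall>b\<in>pcar D. \<forall>A\<subseteq>pcar C. (\<forall>a\<in>A. pleq D b (r a)) \<longrightarrow> (\<exists>x. initial_lift C D r b A x))"
proof -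
  have "(\<exists>!x. initial_lift C D r b A x) \<longleftrightarrow> (\<exists>x. initial_lift C D r b A x)" if "b \<in> pcar D" for b A
    using initial_lift_unique[OF triv_S_poset_is_poset[OF C] triv_S_poset_is_poset[OF D] that]
    by blast
  then show ?thesis
    unfolding Top_def initial_lift_def[symmetric] by (simp add: subset_iff)
qed

section \<open>Part (1): factorization into an embedding followed by a topological map\<close>

definition factor_object :: "('a, 's) spos \<Rightarrow> ('b, 's) spos \<Rightarrow> ('a \<Rightarrow> 'b) \<Rightarrow> ('b \<times> 'a set, 's) spos"
  where "factor_object X B f = trivial_spos
     {(b, S). b \<in> pcar B \<and> S \<subseteq> pcar X \<and> (\<forall>s\<in>S. pleq B (f s) b)}
     (\<lambda>y y'. pleq B (fst y) (fst y') \<and> snd y \<subseteq> snd y')"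

lemma factor_object_triv:
  assumes B: "is_poset (pcar B) (pleq B)"
  shows "triv_S_poset G leS (factor_object X B f)"
  unfolding factor_object_def
proof (intro triv_S_poset_trivial_spos is_posetI)
  let ?Y = "{(b, S). b \<in> pcar B \<and> S \<subseteq> pcar X \<and> (\<forall>s\<in>S. pleq B (f s) b)}"
  fix y y' y'' assume y: "y \<in> ?Y" and y': "y' \<in> ?Y" and y'': "y'' \<in> ?Y"
  show "pleq B (fst y) (fst y) \<and> snd y \<subseteq> snd y"
    using y is_poset_refl[OF B] by auto
  show "pleq B (fst y) (fst y') \<and> snd y \<subseteq> snd y' \<Longrightarrow>
      pleq B (fst y') (fst y'') \<and> snd y' \<subseteq> snd y'' \<Longrightarrow>
      pleq B (fst y) (fst y'') \<and> snd y \<subseteq> snd y''"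
    using y y' y'' is_poset_trans[OF B, of "fst y" "fst y'" "fst y''"] by auto
  show "pleq B (fst y) (fst y') \<and> snd y \<subseteq> snd y' \<Longrightarrow>
      pleq B (fst y') (fst y) \<and> snd y' \<subseteq> snd y \<Longrightarrow> y = y'"
    using y y' is_poset_antisym[OF B, of "fst y" "fst y'"] by (auto intro: prod_eqI)
qed

lemma factor_embedding:
  assumes X: "triv_S_poset G leS X" and B: "triv_S_poset G leS B" and f: "S_map G X B f"
  shows "Emb G X (factor_object X B f) (\<lambda>x. (f x, down_set X x))"
proof -
  have PX: "is_poset (pcar X) (pleq X)" and PB: "is_poset (pcar B) (pleq B)"
    using X B by (simp_all add: triv_S_poset_is_poset)
  have Y: "triv_S_poset G leS (factor_object X B f)"
    using PB by (rule factor_object_triv)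
  have f_into: "\<forall>x\<in>pcar X. f x \<in> pcar B"
    and f_mono: "\<forall>x\<in>pcar X. \<forall>x'\<in>pcar X. pleq X x x' \<longrightarrow> pleq B (f x) (f x')"
    using f S_map_trivial_iff[OF X B] by blast+
  have reflect: "pleq (factor_object X B f) (f x, down_set X x) (f x', down_set X x') \<longleftrightarrow> pleq X x x'"
    if "x \<in> pcar X" "x' \<in> pcar X" for x x'
    using that f_mono down_set_subset_iff[OF PX that] by (auto simp: factor_object_def)
  have "(f x, down_set X x) \<in> pcar (factor_object X B f)" if "x \<in> pcar X" for x
    using that f_into f_mono by (auto simp: factor_object_def down_set_def)
  with reflect show ?thesis
    unfolding Emb_def S_map_trivial_iff[OF X Y] by blast
qed

text \<open>The first projection out of the factor object is topological: the initial lift of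
  (b, A) is b paired with the elements of X lying in every member of A and mapped below b.\<close>

lemma factor_projection_Top:
  assumes X: "triv_S_poset G leS X" and B: "triv_S_poset G leS B" and f: "S_map G X B f"
  shows "Top G (factor_object X B f) B fst"
proof -
  have PB: "is_poset (pcar B) (pleq B)" using B by (rule triv_S_poset_is_poset)
  have Y: "triv_S_poset G leS (factor_object X B f)" using PB by (rule factor_object_triv)
  have f_into: "\<forall>x\<in>pcar X. f x \<in> pcar B"
    using f S_map_trivial_iff[OF X B] by blast
  have "initial_lift (factor_object X B f) B fst b A
      (b, {s \<in> pcar X. pleq B (f s) b \<and> (\<forall>a\<in>A. s \<in> snd a)})"
    if b: "b \<in> pcar B" and A: "\<forall>a\<in>A. pleq B b (fst a)" for b A
  proof -
    have "pleq B (f s) b" if "z \<in> pcar (factor_object X B f)" "pleq B (fst z) b" "s \<in> snd z" for z s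
    proof -
      have "fst z \<in> pcar B" "f s \<in> pcar B" "pleq B (f s) (fst z)"
        using that f_into by (auto simp: factor_object_def split: prod.splits)
      then show ?thesis using is_poset_trans[OF PB _ _ b] that(2) by blast
    qed
    then show ?thesis
      using b A by (auto simp: initial_lift_def factor_object_def)
  qed
  moreover have "S_map G (factor_object X B f) B fst"
    unfolding S_map_trivial_iff[OF Y B] by (auto simp: factor_object_def)
  ultimately show ?thesis
    unfolding Top_iff_initial_lifts[OF Y B] by blast
qed

lemma factorization:
  assumes X: "triv_S_poset G leS (X :: ('a, 's) spos)" and B: "triv_S_poset G leS (B :: ('b, 's) spos)"
    and f: "S_map G X B f"
  shows "\<exists>(Y :: ('b \<times> 'a set, 's) spos) m g.
    triv_S_poset G leS Y \<and> Emb G X Y m \<and> Top G Y B g \<and> (\<forall>x\<in>pcar X. g (m x) = f x)"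
  using factor_object_triv[OF triv_S_poset_is_poset[OF B]]
    factor_embedding[OF X B f] factor_projection_Top[OF X B f]
  by (intro exI[of _ "factor_object X B f"] exI[of _ "\<lambda>x. (f x, down_set X x)"] exI[of _ fst])
    auto

section \<open>Part (2): embeddings lift against topological maps\<close>

text \<open>For a commutative square r \<circ> u = v \<circ> l, the diagonal will send b to the initial lift
  of the source (v b, u[{a. b \<le> l a}]).\<close>

definition lift_source :: "('a, 's) spos \<Rightarrow> ('b, 's) spos \<Rightarrow> ('a \<Rightarrow> 'b) \<Rightarrow> ('a \<Rightarrow> 'c) \<Rightarrow> 'b \<Rightarrow> 'c set"
  where "lift_source A B l u b = u ` {a \<in> pcar A. pleq B b (l a)}"

text \<open>Larger points have smaller sources; this makes the diagonal monotone.\<close>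

lemma lift_source_antimono:
  assumes "is_poset (pcar B) (pleq B)" "\<forall>a\<in>pcar A. l a \<in> pcar B"
    and "b \<in> pcar B" "b' \<in> pcar B" "pleq B b b'"
  shows "lift_source A B l u b' \<subseteq> lift_source A B l u b"
  using assms is_poset_trans[OF assms(1) assms(3,4)] unfolding lift_source_def by blast

lemma lift_source_has_initial_lift:
  assumes A: "triv_S_poset G leS A" and B: "triv_S_poset G leS B"
    and C: "triv_S_poset G leS C" and D: "triv_S_poset G leS D"
    and l: "S_map G A B l" and u: "S_map G A C u" and v: "S_map G B D v" and r: "Top G C D r"
    and comm: "\<forall>a\<in>pcar A. r (u a) = v (l a)" and b: "b \<in> pcar B"
  shows "\<exists>x. initial_lift C D r (v b) (lift_source A B l u b) x"
proof -
  have "pleq D (v b) (r y)" if y: "y \<in> lift_source A B l u b" for y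
  proof -
    obtain a where "a \<in> pcar A" "pleq B b (l a)" "y = u a"
      using y unfolding lift_source_def by blast
    then show ?thesis
      using b l v comm unfolding S_map_trivial_iff[OF A B] S_map_trivial_iff[OF B D] by metis
  qed
  moreover have "lift_source A B l u b \<subseteq> pcar C"
    using u unfolding S_map_trivial_iff[OF A C] lift_source_def by blast
  moreover have "v b \<in> pcar D" using v b unfolding S_map_trivial_iff[OF B D] by blast
  ultimately show ?thesis
    using r unfolding Top_iff_initial_lifts[OF C D] by blast
qed

text \<open>At a point l a the source has u a itself as initial lift, because l reflects the order.\<close>

lemma lift_source_at_image:
  assumes A: "triv_S_poset G leS A" and B: "triv_S_poset G leS B" and C: "triv_S_poset G leS C"
    and l: "Emb G A B l" and u: "S_map G A C u"
    and comm: "\<forall>a\<in>pcar A. r (u a) = v (l a)" and a: "a \<in> pcar A"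
  shows "initial_lift C D r (v (l a)) (lift_source A B l u (l a)) (u a)"
proof -
  have "u a \<in> lift_source A B l u (l a)"
    using a l is_poset_refl[OF triv_S_poset_is_poset[OF B]]
    unfolding Emb_def S_map_trivial_iff[OF A B] lift_source_def by blast
  moreover have "pleq C (u a) y" if "y \<in> lift_source A B l u (l a)" for y
    using that a l u unfolding Emb_def S_map_trivial_iff[OF A C] lift_source_def by blast
  ultimately show ?thesis
    using a u comm unfolding initial_lift_def S_map_trivial_iff[OF A C] by blast
qed

text \<open>Embeddings have the left lifting property against topological maps.  The diagonal is
  monotone since initial lifts are monotone in the source, and it extends u by uniqueness of
  initial lifts.\<close>

lemma Emb_lifts_against_Top:
  assumes A: "triv_S_poset G leS A" and B: "triv_S_poset G leS B"
    and C: "triv_S_poset G leS C" and D: "triv_S_poset G leS D"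
    and l: "Emb G A B l" and r: "Top G C D r"
  shows "has_lift G A B l C D r"
  unfolding has_lift_def
proof (intro allI impI)
  fix u v assume u: "S_map G A C u" and v: "S_map G B D v"
    and comm: "\<forall>a\<in>pcar A. r (u a) = v (l a)"
  have l_map: "S_map G A B l" using l unfolding Emb_def by blast
  have l_into: "\<forall>a\<in>pcar A. l a \<in> pcar B"
    using l_map unfolding S_map_trivial_iff[OF A B] by blast
  define d where "d b = (SOME x. initial_lift C D r (v b) (lift_source A B l u b) x)" for b
  have d_lift: "initial_lift C D r (v b) (lift_source A B l u b) (d b)" if "b \<in> pcar B" for b
    unfolding d_def
    by (rule someI_ex, rule lift_source_has_initial_lift[OF A B C D l_map u v r comm that])
  show "\<exists>d. S_map G B C d \<and> (\<forall>a\<in>pcar A. d (l a) = u a) \<and> (\<forall>b\<in>pcar B. r (d b) = v b)"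
  proof (intro exI[of _ d] conjI ballI)
    have "pleq C (d b) (d b')" if "b \<in> pcar B" "b' \<in> pcar B" "pleq B b b'" for b b'
    proof (rule initial_lift_mono[OF d_lift d_lift])
      show "pleq D (v b) (v b')" using that v unfolding S_map_trivial_iff[OF B D] by blast
      show "lift_source A B l u b' \<subseteq> lift_source A B l u b"
        using lift_source_antimono[OF triv_S_poset_is_poset[OF B] l_into that] .
    qed (use that in auto)
    then show "S_map G B C d"
      using d_lift unfolding S_map_trivial_iff[OF B C] initial_lift_def by blast
  next
    fix a assume a: "a \<in> pcar A"
    have "v (l a) \<in> pcar D"
      using a l_into v unfolding S_map_trivial_iff[OF B D] by blast
    then show "d (l a) = u a"
      using initial_lift_unique[OF triv_S_poset_is_poset[OF C] triv_S_poset_is_poset[OF D]]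
        d_lift l_into lift_source_at_image[OF A B C l u comm a] a by blast
  next
    fix b assume "b \<in> pcar B"
    then show "r (d b) = v b" using d_lift unfolding initial_lift_def by blast
  qed
qed

section \<open>Part (3): lifting against embeddings forces topologicity\<close>

text \<open>The candidates for an initial lift of (b, A): the elements below all of A lying over
  something below b.  An initial lift is a candidate over b above all candidates.\<close>

definition lift_candidates :: "('c, 's) spos \<Rightarrow> ('d, 's) spos \<Rightarrow> ('c \<Rightarrow> 'd) \<Rightarrow> 'd \<Rightarrow> 'c set \<Rightarrow> 'c set"
  where "lift_candidates C D r b A = {z \<in> pcar C. pleq D (r z) b \<and> (\<forall>a\<in>A. pleq C z a)}"

lemma lift_candidates_down_closed:
  assumes C: "triv_S_poset G leS C" and D: "triv_S_poset G leS D" and r: "S_map G C D r"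
    and b: "b \<in> pcar D" and A: "A \<subseteq> pcar C"
    and p: "p \<in> pcar C" and q: "q \<in> lift_candidates C D r b A" and pq: "pleq C p q"
  shows "p \<in> lift_candidates C D r b A"
proof -
  have qC: "q \<in> pcar C" "pleq D (r q) b" "\<forall>a\<in>A. pleq C q a"
    using q unfolding lift_candidates_def by auto
  have "pleq D (r p) b"
    using is_poset_trans[OF triv_S_poset_is_poset[OF D] _ _ b] r p pq qC
    unfolding S_map_trivial_iff[OF C D] by metis
  moreover have "pleq C p a" if "a \<in> A" for a
    using is_poset_trans[OF triv_S_poset_is_poset[OF C] p qC(1)] that A pq qC(3) by blast
  ultimately show ?thesis using p unfolding lift_candidates_def by blast
qed

lemma candidate_in_source_initial_lift:
  assumes D: "is_poset (pcar D) (pleq D)" and r: "\<forall>x\<in>pcar C. r x \<in> pcar D"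
    and b: "b \<in> pcar D" and above: "\<forall>a\<in>A. pleq D b (r a)"
    and a0: "a0 \<in> lift_candidates C D r b A" "a0 \<in> A"
  shows "initial_lift C D r b A a0"
proof -
  have "r a0 = b"
    using is_poset_antisym[OF D] r above b a0 unfolding lift_candidates_def by blast
  then show ?thesis
    using a0 unfolding lift_candidates_def initial_lift_def by blast
qed

fun adjoin_leq :: "('c \<Rightarrow> 'c \<Rightarrow> bool) \<Rightarrow> 'c set \<Rightarrow> 'c set \<Rightarrow> 'c option \<Rightarrow> 'c option \<Rightarrow> bool" where
  "adjoin_leq ord L U (Some p) (Some q) = ord p q"
| "adjoin_leq ord L U (Some p) None = (p \<in> L)"
| "adjoin_leq ord L U None (Some q) = (q \<in> U)"
| "adjoin_leq ord L U None None = True"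

definition adjoin_point :: "'c set \<Rightarrow> ('c \<Rightarrow> 'c \<Rightarrow> bool) \<Rightarrow> 'c set \<Rightarrow> 'c set \<Rightarrow> ('c option, 's) spos"
  where "adjoin_point P ord L U = trivial_spos (insert None (Some ` P)) (adjoin_leq ord L U)"

lemma adjoin_point_triv:
  assumes P: "is_poset P ord"
    and down: "\<And>p q. p \<in> P \<Longrightarrow> q \<in> L \<Longrightarrow> ord p q \<Longrightarrow> p \<in> L"
    and up: "\<And>p q. p \<in> U \<Longrightarrow> q \<in> P \<Longrightarrow> ord p q \<Longrightarrow> q \<in> U"
    and disjoint: "L \<inter> U = {}" and below: "\<And>p q. p \<in> L \<Longrightarrow> q \<in> U \<Longrightarrow> ord p q"
  shows "triv_S_poset G leS (adjoin_point P ord L U)"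
  unfolding adjoin_point_def
proof (intro triv_S_poset_trivial_spos is_posetI)
  have trans: "\<And>p q s. p \<in> P \<Longrightarrow> q \<in> P \<Longrightarrow> s \<in> P \<Longrightarrow> ord p q \<Longrightarrow> ord q s \<Longrightarrow> ord p s"
    using is_poset_trans[OF P] by blast
  fix x y z assume x: "x \<in> insert None (Some ` P)" and y: "y \<in> insert None (Some ` P)"
    and z: "z \<in> insert None (Some ` P)"
  show "adjoin_leq ord L U x x" using x is_poset_refl[OF P] by auto
  show "adjoin_leq ord L U x y \<Longrightarrow> adjoin_leq ord L U y x \<Longrightarrow> x = y"
    using x y is_poset_antisym[OF P] disjoint
    by (cases x; cases y; simp add: inj_image_mem_iff; blast)
  show "adjoin_leq ord L U x y \<Longrightarrow> adjoin_leq ord L U y z \<Longrightarrow> adjoin_leq ord L U x z"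
    using x y z by (cases x; cases y; cases z; simp add: inj_image_mem_iff; meson trans down up below)
qed

lemma adjoin_point_embedding: "Emb G (trivial_spos P ord) (adjoin_point P ord L U) Some"
  by (simp add: Emb_def S_map_def adjoin_point_def trivial_spos_def)

text \<open>Suppose no element of A is a candidate for (b, A).  Adjoin a point to T \<union> A, T the
  candidates, between T and A, and extend r by sending it to b; a diagonal filler for the
  inclusion of T \<union> A then sends the new point to an initial lift of (b, A).\<close>

lemma initial_lift_from_adjoined_point:
  fixes C :: "('c, 's) spos" and D :: "('d, 's) spos" and r b A
  defines "T \<equiv> lift_candidates C D r b A"
  assumes C: "triv_S_poset G leS C" and D: "triv_S_poset G leS D" and r: "S_map G C D r"
    and b: "b \<in> pcar D" and A: "A \<subseteq> pcar C" and above: "\<forall>a\<in>A. pleq D b (r a)"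
    and lift: "has_lift G (trivial_spos (T \<union> A) (pleq C)) (adjoin_point (T \<union> A) (pleq C) T A)
      Some C D r"
  shows "\<exists>x. initial_lift C D r b A x"
proof -
  let ?P = "trivial_spos (T \<union> A) (pleq C) :: ('c, 's) spos"
  let ?Q = "adjoin_point (T \<union> A) (pleq C) T A :: ('c option, 's) spos"
  define v where "v = case_option b r"
  have r_into: "\<forall>x\<in>pcar C. r x \<in> pcar D"
    and r_mono: "\<forall>x\<in>pcar C. \<forall>x'\<in>pcar C. pleq C x x' \<longrightarrow> pleq D (r x) (r x')"
    using r S_map_trivial_iff[OF C D] by blast+
  have TA: "T \<union> A \<subseteq> pcar C" using A unfolding T_def lift_candidates_def by blast
  have u: "S_map G ?P C id"
    using TA C by (auto simp: S_map_def trivial_spos_def triv_S_poset_def)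
  have v: "S_map G ?Q D v"
    unfolding S_map_def
  proof (intro conjI ballI impI)
    fix x y assume "x \<in> pcar ?Q" "y \<in> pcar ?Q" "pleq ?Q x y"
    then show "pleq D (v x) (v y)"
      using TA above r_mono is_poset_refl[OF triv_S_poset_is_poset[OF D] b]
      by (cases x; cases y; simp add: adjoin_point_def v_def T_def lift_candidates_def
          inj_image_mem_iff; blast)
  qed (use TA b r_into D in \<open>auto simp: adjoin_point_def trivial_spos_def v_def triv_S_poset_def\<close>)
  have comm: "\<And>a. a \<in> pcar ?P \<Longrightarrow> r (id a) = v (Some a)" by (simp add: v_def)
  obtain d where d: "S_map G ?Q C d" "\<forall>a\<in>pcar ?P. d (Some a) = id a"
      "\<forall>q\<in>pcar ?Q. r (d q) = v q"
    using lift[unfolded has_lift_def, rule_format, OF u v comm] by blast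
  have d_mono: "\<And>x y. x \<in> pcar ?Q \<Longrightarrow> y \<in> pcar ?Q \<Longrightarrow> pleq ?Q x y \<Longrightarrow> pleq C (d x) (d y)"
    using d(1) unfolding S_map_def by blast
  have "initial_lift C D r b A (d None)"
    unfolding initial_lift_def
  proof (intro conjI ballI impI)
    show "d None \<in> pcar C" using d(1) unfolding S_map_def adjoin_point_def by simp
    show "r (d None) = b" using d(3) by (simp add: adjoin_point_def v_def)
  next
    fix a assume "a \<in> A"
    then show "pleq C (d None) a"
      using d_mono[of None "Some a"] d(2) by (simp add: adjoin_point_def)
  next
    fix z assume "z \<in> pcar C" "pleq D (r z) b \<and> (\<forall>a\<in>A. pleq C z a)"
    then have "z \<in> T" unfolding T_def lift_candidates_def by blast
    then show "pleq C z (d None)"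
      using d_mono[of "Some z" None] d(2) by (simp add: adjoin_point_def)
  qed
  then show ?thesis ..
qed

text \<open>If
  some element of A is a candidate, it is the initial lift of (b, A); otherwise the
  candidates T form a down-set lying below A, and the previous lemma applies.\<close>

lemma lifts_against_Emb_Top:
  assumes C: "triv_S_poset G leS (C :: ('c, 's) spos)" and D: "triv_S_poset G leS D"
    and r: "S_map G C D r"
    and H: "\<forall>(P :: ('c, 's) spos) (Q :: ('c option, 's) spos) l.
          triv_S_poset G leS P \<and> triv_S_poset G leS Q \<and> Emb G P Q l \<longrightarrow> has_lift G P Q l C D r"
  shows "Top G C D r"
  unfolding Top_iff_initial_lifts[OF C D]
proof (intro conjI ballI allI impI)
  fix b A assume b: "b \<in> pcar D" and A: "A \<subseteq> pcar C" and above: "\<forall>a\<in>A. pleq D b (r a)"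
  define T where "T = lift_candidates C D r b A"
  have T_down: "p \<in> T" if "p \<in> pcar C" "q \<in> T" "pleq C p q" for p q
    using lift_candidates_down_closed[OF C D r b A] that unfolding T_def by blast
  show "\<exists>x. initial_lift C D r b A x"
  proof (cases "T \<inter> A = {}")
    case False
    then show ?thesis
      using candidate_in_source_initial_lift[OF triv_S_poset_is_poset[OF D] _ b above] r
      unfolding T_def S_map_trivial_iff[OF C D] by blast
  next
    case True
    have TA: "T \<union> A \<subseteq> pcar C" using A unfolding T_def lift_candidates_def by blast
    then have PTA: "is_poset (T \<union> A) (pleq C)"
      by (rule is_poset_subset[OF triv_S_poset_is_poset[OF C]])
    then have "triv_S_poset G leS (adjoin_point (T \<union> A) (pleq C) T A :: ('c option, 's) spos)"
    proof (rule adjoin_point_triv)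
      show "p \<in> T" if "p \<in> T \<union> A" "q \<in> T" "pleq C p q" for p q
        using T_down that TA by blast
      show "q \<in> A" if "p \<in> A" "q \<in> T \<union> A" "pleq C p q" for p q
        using T_down that TA True by blast
      show "pleq C p q" if "p \<in> T" "q \<in> A" for p q
        using that unfolding T_def lift_candidates_def by blast
    qed (rule True)
    then have "has_lift G (trivial_spos (T \<union> A) (pleq C)) (adjoin_point (T \<union> A) (pleq C) T A)
        Some C D r"
      using H triv_S_poset_trivial_spos[OF PTA] adjoin_point_embedding by blast
    then show ?thesis
      using initial_lift_from_adjoined_point[OF C D r b A above] unfolding T_def by blast
  qed
qed (rule r)

section \<open>Part (4): lifting against topological maps forces embeddings\<close>

definition powerset_spos :: "'a set \<Rightarrow> ('a set, 's) spos" where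
  "powerset_spos X = trivial_spos (Pow X) (\<subseteq>)"

definition point_spos :: "(unit, 's) spos" where
  "point_spos = trivial_spos UNIV (\<lambda>_ _. True)"

lemma powerset_spos_triv: "triv_S_poset G leS (powerset_spos X)"
  unfolding powerset_spos_def by (intro triv_S_poset_trivial_spos is_posetI) auto

lemma point_spos_triv: "triv_S_poset G leS point_spos"
  unfolding point_spos_def by (intro triv_S_poset_trivial_spos is_posetI) auto

lemma powerset_collapse_Top: "Top G (powerset_spos X) point_spos (\<lambda>_. ())"
  unfolding Top_iff_initial_lifts[OF powerset_spos_triv point_spos_triv]
proof (intro conjI ballI allI impI)
  show "S_map G (powerset_spos X) point_spos (\<lambda>_. ())"
    unfolding S_map_trivial_iff[OF powerset_spos_triv point_spos_triv] by (simp add: point_spos_def)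
  fix b :: unit and F assume "F \<subseteq> pcar (powerset_spos X)"
  then have "initial_lift (powerset_spos X) point_spos (\<lambda>_. ()) b F (X \<inter> \<Inter>F)"
    by (auto simp: initial_lift_def powerset_spos_def)
  then show "\<exists>x. initial_lift (powerset_spos X) point_spos (\<lambda>_. ()) b F x" ..
qed

text \<open>A monotone map l lifting against this collapse is an embedding: a filler for the
  down-set map of A satisfies d (l x) = down-set of x, so l x \<le> l x' gives x \<le> x'.\<close>

lemma lifts_against_Top_Emb:
  assumes A: "triv_S_poset G leS (A :: ('a, 's) spos)" and B: "triv_S_poset G leS B"
    and l: "S_map G A B l"
    and lift: "has_lift G A B l (powerset_spos (pcar A)) point_spos (\<lambda>_. ())"
  shows "Emb G A B l"
proof -
  let ?C = "powerset_spos (pcar A) :: ('a set, 's) spos"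
  have PA: "is_poset (pcar A) (pleq A)" using A by (rule triv_S_poset_is_poset)
  have u: "S_map G A ?C (down_set A)"
    unfolding S_map_trivial_iff[OF A powerset_spos_triv]
    using down_set_subset_iff[OF PA] by (auto simp: powerset_spos_def down_set_def)
  have v: "S_map G B point_spos (\<lambda>_. ())"
    unfolding S_map_trivial_iff[OF B point_spos_triv] by (simp add: point_spos_def)
  obtain d where d: "S_map G B ?C d" "\<forall>a\<in>pcar A. d (l a) = down_set A a"
    using lift[unfolded has_lift_def, rule_format, OF u v] by auto
  have "pleq A x x'" if "x \<in> pcar A" "x' \<in> pcar A" "pleq B (l x) (l x')" for x x'
  proof -
    have "d (l x) \<subseteq> d (l x')"
      using d(1) l that unfolding S_map_def by (auto simp: powerset_spos_def)
    then show ?thesis using d(2) that down_set_subset_iff[OF PA] by simp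
  qed
  with l show ?thesis
    unfolding Emb_def S_map_def by blast
qed

text \<open>The four parts are exactly the four conjuncts.\<close>

theorem mainTheorem10:
  fixes G :: "'s monoid" and leS :: "'s \<Rightarrow> 's \<Rightarrow> bool"
  assumes "pogroup G leS"
  shows
   "(\<forall>(X :: ('a, 's) spos) (B :: ('b, 's) spos) f.
       triv_S_poset G leS X \<and> triv_S_poset G leS B \<and> S_map G X B f \<longrightarrow>
       (\<exists>(Y :: ('b \<times> 'a set, 's) spos) m g.
          triv_S_poset G leS Y \<and> Emb G X Y m \<and> Top G Y B g \<and>
          (\<forall>x\<in>pcar X. g (m x) = f x)))
    \<and> (\<forall>(A :: ('a, 's) spos) (B :: ('b, 's) spos) l (C :: ('c, 's) spos) (D :: ('d, 's) spos) r.
       triv_S_poset G leS A \<and> triv_S_poset G leS B \<and> triv_S_poset G leS C \<and> triv_S_poset G leS D \<and>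
       Emb G A B l \<and> Top G C D r \<longrightarrow> has_lift G A B l C D r)
    \<and> (\<forall>(C :: ('c, 's) spos) (D :: ('d, 's) spos) r.
       triv_S_poset G leS C \<and> triv_S_poset G leS D \<and> S_map G C D r \<and>
       (\<forall>(P :: ('c, 's) spos) (Q :: ('c option, 's) spos) l.
          triv_S_poset G leS P \<and> triv_S_poset G leS Q \<and> Emb G P Q l \<longrightarrow> has_lift G P Q l C D r)
       \<longrightarrow> Top G C D r)
    \<and> (\<forall>(A :: ('a, 's) spos) (B :: ('b, 's) spos) l.
       triv_S_poset G leS A \<and> triv_S_poset G leS B \<and> S_map G A B l \<and>
       (\<forall>(C :: ('a set, 's) spos) (D :: (unit, 's) spos) r.
          triv_S_poset G leS C \<and> triv_S_poset G leS D \<and> Top G C D r \<longrightarrow> has_lift G A B l C D r)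
       \<longrightarrow> Emb G A B l)"
  apply (intro conjI allI impI; elim conjE)
  subgoal by (rule factorization)
  subgoal by (rule Emb_lifts_against_Top)
  subgoal by (rule lifts_against_Emb_Top)
  subgoal by (blast intro: lifts_against_Top_Emb powerset_spos_triv point_spos_triv
      powerset_collapse_Top)
  done

end
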